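(* Let $G=(V,E)$ be a finite undirected unweighted simple graph and let $u\in V$. Let $\mathcal{F}$ be the set of all spanning rooted forests of $G$, let $\mathcal{F}_{uu}$ be the set of spanning rooted forests of $G$ in which $u$ is a root, and define $$\mathcal{S}_u=\{(F,v^* )\;:\;F\in\mathcal{F}_{uu},\ v^*\in T(F,u)\},$$ where $T(F,u)$ denotes the tree of $F$ rooted at $u$ (so $v^*$ ranges over the vertices of that tree). Then $|\mathcal{S}_u|=|\mathcal{F}|$.
   Context: A spanning forest of $G=(V,E)$ is an acyclic subgraph $(V,E')$ with $E'\subseteq E$ (same vertex set as $G$); each connected component is a tree. A spanning rooted forest is a spanning forest together with a choice of one root vertex in each of its trees. Two spanning rooted forests are equal iff they have the same edge set and the same set of roots. *)

theory Defs
  imports Main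
begin

definition simple_graph :: "'a set \<Rightarrow> 'a set set \<Rightarrow> bool" where
  "simple_graph V E \<longleftrightarrow> finite V \<and> (\<forall>e\<in>E. \<exists>x y. x \<in> V \<and> y \<in> V \<and> x \<noteq> y \<and> e = {x, y})"

definition is_cycle :: "'a set set \<Rightarrow> 'a list \<Rightarrow> bool" where
  "is_cycle F vs \<longleftrightarrow> length vs \<ge> 3 \<and> distinct vs \<and>
     (\<forall>i < length vs. {vs ! i, vs ! ((i + 1) mod length vs)} \<in> F)"

definition acyclic_edges :: "'a set set \<Rightarrow> bool" where
  "acyclic_edges F \<longleftrightarrow> (\<nexists>vs. is_cycle F vs)"

definition spanning_forest :: "'a set \<Rightarrow> 'a set set \<Rightarrow> 'a set set \<Rightarrow> bool" where
  "spanning_forest V E F \<longleftrightarrow> F \<subseteq> E \<and> acyclic_edges F"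

definition reach :: "'a set set \<Rightarrow> 'a \<Rightarrow> 'a \<Rightarrow> bool" where
  "reach F x y \<longleftrightarrow> (x, y) \<in> {(a, b). {a, b} \<in> F}\<^sup>*"

definition spanning_rooted_forests :: "'a set \<Rightarrow> 'a set set \<Rightarrow> ('a set set \<times> 'a set) set" where
  "spanning_rooted_forests V E =
     {(F, R). spanning_forest V E F \<and> R \<subseteq> V \<and> (\<forall>v\<in>V. \<exists>!r. r \<in> R \<and> reach F v r)}"

definition rooted_forests_uu :: "'a set \<Rightarrow> 'a set set \<Rightarrow> 'a \<Rightarrow> ('a set set \<times> 'a set) set" where
  "rooted_forests_uu V E u = {(F, R) \<in> spanning_rooted_forests V E. u \<in> R}"

definition S_u :: "'a set \<Rightarrow> 'a set set \<Rightarrow> 'a \<Rightarrow> (('a set set \<times> 'a set) \<times> 'a) set" where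
  "S_u V E u = {(FR, v). FR \<in> rooted_forests_uu V E u \<and> v \<in> V \<and> reach (fst FR) u v}"

end

theory Submission
  imports Defs
begin

text \<open>Moving the root of the tree containing \<open>u\<close> to an arbitrary vertex \<open>v\<close> of that tree
  turns a pair \<open>(F, v)\<close> of \<open>S\<^sub>u\<close> into an arbitrary spanning rooted forest; conversely, moving
  the root of the tree of \<open>u\<close> back to \<open>u\<close> recovers the pair, with \<open>v\<close> the old root.
  Neither acyclicity nor finiteness plays a role: the two sets are in bijection outright.\<close>

lemma reach_refl: "reach F x x"
  unfolding reach_def by simp

lemma reach_sym:
  assumes "reach F x y"
  shows "reach F y x"
proof -
  have "sym {(a, b). {a, b} \<in> F}"
    by (auto simp: sym_def insert_commute)
  then show ?thesis
    using assms unfolding reach_def by (auto dest: symD[OF sym_rtrancl])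
qed

lemma reach_trans: "reach F x y \<Longrightarrow> reach F y z \<Longrightarrow> reach F x z"
  unfolding reach_def by (rule rtrancl_trans)

lemma spanning_rooted_forestsD:
  assumes "(F, R) \<in> spanning_rooted_forests V E"
  shows "spanning_forest V E F" "R \<subseteq> V" "v \<in> V \<Longrightarrow> \<exists>!r. r \<in> R \<and> reach F v r"
  using assms unfolding spanning_rooted_forests_def by auto

lemma spanning_rooted_forest_root_unique:
  assumes "(F, R) \<in> spanning_rooted_forests V E" "v \<in> V"
    and "r \<in> R" "reach F v r" "r' \<in> R" "reach F v r'"
  shows "r = r'"
  using spanning_rooted_forestsD(3)[OF assms(1,2)] assms(3-) by blast

lemma spanning_rooted_forest_move_root:
  assumes FR: "(F, R) \<in> spanning_rooted_forests V E"
    and "a \<in> R" "b \<in> V" "reach F a b"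
  shows "(F, insert b (R - {a})) \<in> spanning_rooted_forests V E"
proof -
  have "\<exists>!r. r \<in> insert b (R - {a}) \<and> reach F w r" if w: "w \<in> V" for w
  proof (cases "reach F w a")
    case True
    show ?thesis
    proof (rule ex1I[of _ b])
      show "b \<in> insert b (R - {a}) \<and> reach F w b"
        using reach_trans[OF True \<open>reach F a b\<close>] by simp
    next
      fix r
      assume r: "r \<in> insert b (R - {a}) \<and> reach F w r"
      show "r = b"
      proof (rule ccontr)
        assume "r \<noteq> b"
        with r have "r \<in> R" "r \<noteq> a" by auto
        with r True \<open>a \<in> R\<close> show False
          using spanning_rooted_forest_root_unique[OF FR w] by blast
      qed
    qed
  next
    case False
    have "\<not> reach F w b"
      using False reach_trans[OF _ reach_sym[OF \<open>reach F a b\<close>]] by blast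
    obtain r where r: "r \<in> R" "reach F w r"
      using spanning_rooted_forestsD(3)[OF FR w] by blast
    show ?thesis
    proof (rule ex1I[of _ r])
      show "r \<in> insert b (R - {a}) \<and> reach F w r"
        using r False by auto
    next
      fix r'
      assume "r' \<in> insert b (R - {a}) \<and> reach F w r'"
      with \<open>\<not> reach F w b\<close> have "r' \<in> R" "reach F w r'" by auto
      with r show "r' = r"
        using spanning_rooted_forest_root_unique[OF FR w] by blast
    qed
  qed
  then show ?thesis
    using spanning_rooted_forestsD(1,2)[OF FR] \<open>b \<in> V\<close>
    unfolding spanning_rooted_forests_def by auto
qed

definition tree_root :: "'a set set \<Rightarrow> 'a set \<Rightarrow> 'a \<Rightarrow> 'a" where
  "tree_root F R v = (THE r. r \<in> R \<and> reach F v r)"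

lemma tree_root_eqI:
  assumes "(F, R) \<in> spanning_rooted_forests V E" "v \<in> V" "r \<in> R" "reach F v r"
  shows "tree_root F R v = r"
  unfolding tree_root_def
  using spanning_rooted_forest_root_unique[OF assms(1,2)] assms(3,4) by blast

lemma tree_root:
  assumes "(F, R) \<in> spanning_rooted_forests V E" "v \<in> V"
  shows "tree_root F R v \<in> R" "reach F v (tree_root F R v)"
  using theI'[OF spanning_rooted_forestsD(3)[OF assms]] unfolding tree_root_def by auto

fun move_root :: "'a \<Rightarrow> ('a set set \<times> 'a set) \<times> 'a \<Rightarrow> 'a set set \<times> 'a set" where
  "move_root u ((F, R), v) = (F, insert v (R - {u}))"

fun restore_root :: "'a \<Rightarrow> 'a set set \<times> 'a set \<Rightarrow> ('a set set \<times> 'a set) \<times> 'a" where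
  "restore_root u (F, R) = ((F, insert u (R - {tree_root F R u})), tree_root F R u)"

lemma S_uD:
  assumes "((F, R), v) \<in> S_u V E u"
  shows "(F, R) \<in> spanning_rooted_forests V E" "u \<in> R" "v \<in> V" "reach F u v"
  using assms unfolding S_u_def rooted_forests_uu_def by auto

lemma move_root_in_spanning_rooted_forests:
  assumes "((F, R), v) \<in> S_u V E u"
  shows "move_root u ((F, R), v) \<in> spanning_rooted_forests V E"
  using spanning_rooted_forest_move_root[OF S_uD[OF assms]] by simp

lemma restore_root_in_S_u:
  assumes FR: "(F, R) \<in> spanning_rooted_forests V E" and "u \<in> V"
  shows "restore_root u (F, R) \<in> S_u V E u"
proof -
  let ?r = "tree_root F R u"
  have r: "?r \<in> R" "reach F u ?r"
    using tree_root[OF FR \<open>u \<in> V\<close>] by simp_all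
  have "(F, insert u (R - {?r})) \<in> spanning_rooted_forests V E"
    using spanning_rooted_forest_move_root[OF FR r(1) \<open>u \<in> V\<close> reach_sym[OF r(2)]] .
  moreover have "?r \<in> V"
    using r(1) spanning_rooted_forestsD(2)[OF FR] by blast
  ultimately show ?thesis
    using r(2) unfolding S_u_def rooted_forests_uu_def by simp
qed

lemma restore_root_move_root:
  assumes S: "((F, R), v) \<in> S_u V E u"
  shows "restore_root u (move_root u ((F, R), v)) = ((F, R), v)"
proof -
  note FR = S_uD(1)[OF S] and uR = S_uD(2)[OF S] and uv = S_uD(4)[OF S]
  have uV: "u \<in> V"
    using uR spanning_rooted_forestsD(2)[OF FR] by blast
  have "v \<in> R \<Longrightarrow> v = u"
    using spanning_rooted_forest_root_unique[OF FR uV _ uv uR reach_refl] .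
  then have R: "insert u (insert v (R - {u}) - {v}) = R"
    using uR by auto
  have "tree_root F (insert v (R - {u})) u = v"
    using tree_root_eqI[OF move_root_in_spanning_rooted_forests[OF S, simplified]]
      uV uv by simp
  with R show ?thesis by simp
qed

lemma move_root_restore_root:
  assumes FR: "(F, R) \<in> spanning_rooted_forests V E" and "u \<in> V"
  shows "move_root u (restore_root u (F, R)) = (F, R)"
proof -
  let ?r = "tree_root F R u"
  have "u \<in> R \<Longrightarrow> u = ?r"
    using tree_root_eqI[OF FR \<open>u \<in> V\<close> _ reach_refl] by simp
  then show ?thesis
    using tree_root(1)[OF FR \<open>u \<in> V\<close>] by auto
qed

lemma bij_betw_move_root:
  assumes "u \<in> V"
  shows "bij_betw (move_root u) (S_u V E u) (spanning_rooted_forests V E)"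
proof (rule bij_betw_byWitness[where f' = "restore_root u"])
  show "\<forall>x\<in>S_u V E u. restore_root u (move_root u x) = x"
    using restore_root_move_root[of _ _ _ V E u]
    by (simp only: Ball_def split_paired_All) blast
  show "\<forall>y\<in>spanning_rooted_forests V E. move_root u (restore_root u y) = y"
    using move_root_restore_root[OF _ assms]
    by (simp only: Ball_def split_paired_All) blast
  show "move_root u ` S_u V E u \<subseteq> spanning_rooted_forests V E"
    using move_root_in_spanning_rooted_forests[of _ _ _ V E u]
    by (simp only: image_subset_iff Ball_def split_paired_All) blast
  show "restore_root u ` spanning_rooted_forests V E \<subseteq> S_u V E u"
    using restore_root_in_S_u[OF _ assms]
    by (simp only: image_subset_iff Ball_def split_paired_All) blast
qed

theorem lemma4p4:
  fixes V :: "'a set" and E :: "'a set set" and u :: 'a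
  assumes "simple_graph V E" and "u \<in> V"
  shows "card (S_u V E u) = card (spanning_rooted_forests V E)"
  using bij_betw_same_card[OF bij_betw_move_root[OF assms(2)]] .

end
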